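(* Let $X\subseteq R^n$ be an unbounded definable set. Then $X$ is not definably contractible.
   Context: Throughout, $\mathcal R=\langle R,<,+,0,\{x\mapsto\lambda x\}_{\lambda\in\Lambda}\rangle$ is an ordered vector space over an ordered division ring $\Lambda$; "definable" means definable in $\mathcal R$ with parameters; $R^n$ carries the product of the order topology. A set is bounded if it is contained in a box $(a_1,b_1)\times\dots\times(a_n,b_n)$ with $a_i,b_i\in R$. For definable $A\subseteq X$, $X$ deformation retracts to $A$ if there are $q\in R$, $q\ge0$, and a definable continuous $H:[0,q]\times X\to X$ with $H(0,X)=A$, $H(t,a)=a$ for all $t\in[0,q]$, $a\in A$, and $H(q,x)=x$ for all $x\in X$; $X$ is definably contractible if it deformation retracts to a singleton contained in $X$. *)

theory Defs
  imports "HOL-Analysis.Analysis"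
begin

definition ordered_vector_space :: "('k::{division_ring,linordered_ring_strict} \<Rightarrow> 'v::linordered_ab_group_add \<Rightarrow> 'v) \<Rightarrow> bool" where
  "ordered_vector_space sc \<longleftrightarrow>
     (\<forall>a x y. sc a (x + y) = sc a x + sc a y) \<and>
     (\<forall>a b x. sc (a + b) x = sc a x + sc b x) \<and>
     (\<forall>a b x. sc (a * b) x = sc a (sc b x)) \<and>
     (\<forall>x. sc 1 x = x) \<and>
     (\<forall>a x y. 0 < a \<longrightarrow> x < y \<longrightarrow> sc a x < sc a y)"

text \<open>First-order language of ordered vector spaces: constants 0, +, < and unary
  function symbols x \<mapsto> \<lambda>x for each scalar; parameters from R are allowed (Cst).\<close>

datatype ('k, 'v) tm = Var nat | Cst 'v | Zero | Plus "('k, 'v) tm" "('k, 'v) tm" | Scal 'k "('k, 'v) tm"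

datatype ('k, 'v) fm = Eq "('k, 'v) tm" "('k, 'v) tm" | Less "('k, 'v) tm" "('k, 'v) tm"
  | Neg "('k, 'v) fm" | Conj "('k, 'v) fm" "('k, 'v) fm" | Ex nat "('k, 'v) fm"

primrec eval_tm :: "('k \<Rightarrow> 'v \<Rightarrow> 'v) \<Rightarrow> (nat \<Rightarrow> 'v::linordered_ab_group_add) \<Rightarrow> ('k, 'v) tm \<Rightarrow> 'v" where
  "eval_tm sc e (Var i) = e i"
| "eval_tm sc e (Cst c) = c"
| "eval_tm sc e Zero = 0"
| "eval_tm sc e (Plus s t) = eval_tm sc e s + eval_tm sc e t"
| "eval_tm sc e (Scal a t) = sc a (eval_tm sc e t)"

primrec sat :: "('k \<Rightarrow> 'v \<Rightarrow> 'v) \<Rightarrow> (nat \<Rightarrow> 'v::linordered_ab_group_add) \<Rightarrow> ('k, 'v) fm \<Rightarrow> bool" where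
  "sat sc e (Eq s t) = (eval_tm sc e s = eval_tm sc e t)"
| "sat sc e (Less s t) = (eval_tm sc e s < eval_tm sc e t)"
| "sat sc e (Neg f) = (\<not> sat sc e f)"
| "sat sc e (Conj f g) = (sat sc e f \<and> sat sc e g)"
| "sat sc e (Ex i f) = (\<exists>v. sat sc (e(i := v)) f)"

text \<open>A set of points with coordinates indexed by a finite type 'i is definable (with
  parameters) if it is defined by a formula, coordinates being assigned to distinct
  variables via an injection into nat (remaining variables are set to 0).\<close>

definition definable :: "('k \<Rightarrow> 'v \<Rightarrow> 'v) \<Rightarrow> ('i \<Rightarrow> 'v::linordered_ab_group_add) set \<Rightarrow> bool" where
  "definable sc S \<longleftrightarrow> finite (UNIV :: 'i set) \<and>
     (\<exists>(\<phi> :: ('k, 'v) fm) (\<iota> :: 'i \<Rightarrow> nat). inj \<iota> \<and>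
        S = {x. sat sc (\<lambda>j. if j \<in> range \<iota> then x (inv \<iota> j) else 0) \<phi>})"

definition definable_vset :: "('k \<Rightarrow> 'v \<Rightarrow> 'v) \<Rightarrow> ('v::linordered_ab_group_add ^ 'n) set \<Rightarrow> bool" where
  "definable_vset sc X \<longleftrightarrow> definable sc (vec_nth ` X)"

text \<open>Definability of a map H : [0,q] \<times> X \<rightarrow> R^n: its graph, a subset of R^(1+n+n),
  is definable.\<close>

definition definable_homotopy :: "('k \<Rightarrow> 'v \<Rightarrow> 'v) \<Rightarrow> 'v \<Rightarrow> ('v::linordered_ab_group_add ^ 'n) set
    \<Rightarrow> ('v \<times> ('v ^ 'n) \<Rightarrow> 'v ^ 'n) \<Rightarrow> bool" where
  "definable_homotopy sc q X H \<longleftrightarrow>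
     definable sc {(\<lambda>k :: unit + 'n + 'n. case k of Inl _ \<Rightarrow> t | Inr (Inl i) \<Rightarrow> x $ i
                                     | Inr (Inr i) \<Rightarrow> H (t, x) $ i) | t x. t \<in> {0..q} \<and> x \<in> X}"

definition bounded_box :: "('v::linorder ^ 'n) set \<Rightarrow> bool" where
  "bounded_box X \<longleftrightarrow> (\<exists>a b. \<forall>x\<in>X. \<forall>i. a $ i < x $ i \<and> x $ i < b $ i)"

definition deformation_retracts :: "('k \<Rightarrow> 'v \<Rightarrow> 'v)
    \<Rightarrow> ('v::{linordered_ab_group_add,linorder_topology} ^ 'n) set \<Rightarrow> ('v ^ 'n) set \<Rightarrow> bool" where
  "deformation_retracts sc X A \<longleftrightarrow>
     (\<exists>q H. 0 \<le> q \<and> definable_homotopy sc q X H \<and> continuous_on ({0..q} \<times> X) H \<and>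
        H ` ({0..q} \<times> X) \<subseteq> X \<and>
        (\<lambda>x. H (0, x)) ` X = A \<and>
        (\<forall>t\<in>{0..q}. \<forall>a\<in>A. H (t, a) = a) \<and>
        (\<forall>x\<in>X. H (q, x) = x))"

definition definably_contractible :: "('k \<Rightarrow> 'v \<Rightarrow> 'v)
    \<Rightarrow> ('v::{linordered_ab_group_add,linorder_topology} ^ 'n) set \<Rightarrow> bool" where
  "definably_contractible sc X \<longleftrightarrow> (\<exists>a\<in>X. deformation_retracts sc X {a})"

end

theory Submission
  imports Defs
begin

text \<open>Suppose H : [0,q] \<times> X \<rightarrow> X is a definable contraction of X to the point a. Fourier--Motzkin
  elimination turns the defining formula of its graph into a finite disjunction of conjunctions
  of linear equations and strict inequalities. For fixed x \<in> X the i-th coordinate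
  t \<mapsto> H(t,x) $ i is continuous and its graph is cut out by these finitely many linear
  conditions, so between consecutive critical parameters it is affine, with slope one of the
  finitely many ratios of coefficients occurring in the formula. The slope is therefore bounded by
  a constant C that does not depend on x, whence x $ i = H(q,x) $ i lies within C q of
  H(0,x) $ i = a $ i, and X is bounded.\<close>

lemma continuous_on_eq_at_islimpt:
  fixes f g :: "'a::topological_space \<Rightarrow> 'b::t2_space"
  assumes "continuous_on S f" "continuous_on S g" "T \<subseteq> S" "\<And>t. t \<in> T \<Longrightarrow> f t = g t"
    and "x \<in> S" "x islimpt T"
  shows "f x = g x"
proof -
  have nontriv: "at x within T \<noteq> bot"
    using \<open>x islimpt T\<close> trivial_limit_within by blast
  have "(f \<longlongrightarrow> f x) (at x within T)" "(g \<longlongrightarrow> g x) (at x within T)"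
    using assms by (auto intro: tendsto_within_subset simp: continuous_on_def)
  moreover have "eventually (\<lambda>t. f t = g t) (at x within T)"
    using assms(4) by (auto simp: eventually_at_filter intro: always_eventually)
  ultimately show ?thesis
    using tendsto_unique[OF nontriv] tendsto_cong by metis
qed

lemma cont_vec_nth: "continuous_on S f \<Longrightarrow> continuous_on S (\<lambda>x. f x $ i)"
  unfolding continuous_on_def by (auto intro: tendsto_vec_nth)

locale ordered_vs =
  fixes sc :: "'k::{division_ring,linordered_ring_strict} \<Rightarrow> 'v::{linordered_ab_group_add,linorder_topology} \<Rightarrow> 'v"
  assumes ordered_vs: "ordered_vector_space sc"
begin

lemma sc_add_right: "sc a (x + y) = sc a x + sc a y"
  and sc_add_left: "sc (a + b) x = sc a x + sc b x"
  and sc_mult: "sc (a * b) x = sc a (sc b x)"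
  and sc_one: "sc 1 x = x"
  and sc_strict_mono: "0 < a \<Longrightarrow> x < y \<Longrightarrow> sc a x < sc a y"
  using ordered_vs unfolding ordered_vector_space_def by blast+

lemma sc_zero_right [simp]: "sc a 0 = 0"
  using sc_add_right[of a 0 0] by simp

lemma sc_zero_left [simp]: "sc 0 x = 0"
  using sc_add_left[of 0 0 x] by simp

lemma sc_minus_right: "sc a (- x) = - sc a x"
  using sc_add_right[of a x "- x"] by (simp add: eq_neg_iff_add_eq_0 add.commute)

lemma sc_minus_left: "sc (- a) x = - sc a x"
  using sc_add_left[of a "- a" x] by (simp add: eq_neg_iff_add_eq_0 add.commute)

lemma sc_diff_right: "sc a (x - y) = sc a x - sc a y"
  using sc_add_right[of a x "- y"] by (simp add: sc_minus_right)

lemma sc_diff_left: "sc (a - b) x = sc a x - sc b x"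
  using sc_add_left[of a "- b" x] by (simp add: sc_minus_left)

lemma sc_inverse_left: "a \<noteq> 0 \<Longrightarrow> sc (inverse a) (sc a x) = x"
  and sc_inverse_right: "a \<noteq> 0 \<Longrightarrow> sc a (sc (inverse a) x) = x"
  by (simp_all add: sc_mult[symmetric] sc_one)

lemma sc_strict_antimono: "a < 0 \<Longrightarrow> x < y \<Longrightarrow> sc a y < sc a x"
  using sc_strict_mono[of "- a" x y] by (simp add: sc_minus_left)

lemma sc_less_cancel_pos: "0 < a \<Longrightarrow> sc a x < sc a y \<longleftrightarrow> x < y"
  by (metis linorder_neq_iff order_less_asym sc_strict_mono)

lemma sc_less_cancel_neg: "a < 0 \<Longrightarrow> sc a x < sc a y \<longleftrightarrow> y < x"
  by (metis linorder_neq_iff order_less_asym sc_strict_antimono)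

lemma sc_eq_0_iff: "a \<noteq> 0 \<Longrightarrow> sc a x = 0 \<longleftrightarrow> x = 0"
  by (metis sc_inverse_left sc_zero_right)

lemma sc_less_0_iff: "a \<noteq> 0 \<Longrightarrow> sc a x < 0 \<longleftrightarrow> (0 < a \<and> x < 0) \<or> (a < 0 \<and> 0 < x)"
  by (metis linorder_neq_iff sc_less_cancel_neg sc_less_cancel_pos sc_zero_right order_less_asym)

lemma sc_mono_scalar: "0 \<le> x \<Longrightarrow> a \<le> b \<Longrightarrow> sc a x \<le> sc b x"
proof -
  assume "0 \<le> x" "a \<le> b"
  then have "0 \<le> sc (b - a) x"
    using sc_strict_mono[of "b - a" 0 x] by (cases "x = 0"; cases "a = b") (auto simp: le_less)
  then show ?thesis by (simp add: sc_diff_left)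
qed

lemma exists_between: "(x::'v) < y \<Longrightarrow> \<exists>z. x < z \<and> z < y"
proof -
  assume "x < y"
  have "(0::'k) < 1"
    using zero_le_square[of "1::'k"] by (simp add: order_le_neq_trans)
  then have two: "(0::'k) < 1 + 1" using add_pos_pos by blast
  have "0 < inverse (1 + 1 :: 'k)"
  proof (rule ccontr)
    assume "\<not> 0 < inverse (1 + 1 :: 'k)"
    then have "(1 + 1) * inverse (1 + 1) \<le> (0::'k)"
      using two by (intro mult_nonneg_nonpos) auto
    then show False using \<open>(0::'k) < 1\<close> two by (simp split: if_splits)
  qed
  moreover have "sc (inverse (1 + 1)) (z + z) = z" for z
  proof -
    have "sc (1 + 1) z = z + z" using sc_add_left[of 1 1 z] by (simp only: sc_one)
    then show ?thesis using two by (metis sc_inverse_left order_less_irrefl)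
  qed
  moreover have "x + x < x + y" "x + y < y + y" using \<open>x < y\<close> by simp_all
  ultimately show ?thesis using sc_strict_mono by metis
qed

end

locale nontrivial_ordered_vs = ordered_vs sc
  for sc :: "'k::{division_ring,linordered_ring_strict} \<Rightarrow> 'v::{linordered_ab_group_add,linorder_topology} \<Rightarrow> 'v" +
  assumes nontrivial: "\<exists>r::'v. r \<noteq> 0"
begin

lemma exists_pos: "\<exists>r::'v. 0 < r"
proof -
  obtain r :: 'v where "r \<noteq> 0" using nontrivial by blast
  then have "0 < - r \<or> 0 < r" by (simp add: linorder_neq_iff)
  then show ?thesis by blast
qed

lemma exists_between_finite:
  fixes A B :: "'v set"
  assumes "finite A" "finite B" "\<forall>a\<in>A. \<forall>b\<in>B. a < b"
  shows "\<exists>v. (\<forall>a\<in>A. a < v) \<and> (\<forall>b\<in>B. v < b)"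
proof -
  obtain r :: 'v where r: "0 < r" using exists_pos by blast
  have below_Min: "\<forall>b\<in>B. Min B - r < b"
  proof
    fix b assume "b \<in> B"
    then have "Min B \<le> b" using assms(2) by simp
    moreover have "Min B - r < Min B" using r by simp
    ultimately show "Min B - r < b" by order
  qed
  have above_Max: "\<forall>a\<in>A. a < Max A + r"
  proof
    fix a assume "a \<in> A"
    then have "a \<le> Max A" using assms(1) by simp
    moreover have "Max A < Max A + r" using r by simp
    ultimately show "a < Max A + r" by order
  qed
  consider "A = {}" | "B = {}" | "A \<noteq> {}" "B \<noteq> {}" by blast
  then show ?thesis
  proof cases
    case 3
    then have "Max A < Min B" using assms by simp
    then obtain v where v: "Max A < v" "v < Min B" using exists_between by blast
    have "\<forall>a\<in>A. a < v"
      using v(1) assms(1) by (metis Max_ge order_le_less_trans)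
    moreover have "\<forall>b\<in>B. v < b"
      using v(2) assms(2) by (metis Min_le order_less_le_trans)
    ultimately show ?thesis by blast
  qed (use below_Min above_Max in blast)+
qed

end

text \<open>A linear form (cs, c) stands for the sum of the c_j x_j over the pairs (j, c_j) in cs, plus c;
  an atom (f, True) asserts f = 0 and (f, False) asserts f < 0; a DNF is a disjunction of
  conjunctions of atoms.\<close>

type_synonym ('k, 'v) linform = "(nat \<times> 'k) list \<times> 'v"
type_synonym ('k, 'v) atom = "('k, 'v) linform \<times> bool"
type_synonym ('k, 'v) dnf = "('k, 'v) atom list list"

definition lin_coeff :: "nat \<Rightarrow> ('k::comm_monoid_add, 'v) linform \<Rightarrow> 'k" where
  "lin_coeff k f = sum_list (map (\<lambda>(j, a). if j = k then a else 0) (fst f))"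

definition lin_drop :: "nat \<Rightarrow> ('k, 'v) linform \<Rightarrow> ('k, 'v) linform" where
  "lin_drop k f = (filter (\<lambda>(j, a). j \<noteq> k) (fst f), snd f)"

definition lin_add :: "('k, 'v::plus) linform \<Rightarrow> ('k, 'v) linform \<Rightarrow> ('k, 'v) linform" where
  "lin_add f g = (fst f @ fst g, snd f + snd g)"

definition dnf_conj :: "('k, 'v) dnf \<Rightarrow> ('k, 'v) dnf \<Rightarrow> ('k, 'v) dnf" where
  "dnf_conj D1 D2 = concat (map (\<lambda>c1. map (\<lambda>c2. c1 @ c2) D2) D1)"

context ordered_vs
begin

definition lin_eval :: "('k, 'v) linform \<Rightarrow> (nat \<Rightarrow> 'v) \<Rightarrow> 'v" where
  "lin_eval f e = sum_list (map (\<lambda>(j, a). sc a (e j)) (fst f)) + snd f"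

definition lin_scale :: "'k \<Rightarrow> ('k, 'v) linform \<Rightarrow> ('k, 'v) linform" where
  "lin_scale m f = (map (\<lambda>(j, a). (j, m * a)) (fst f), sc m (snd f))"

definition lin_neg :: "('k, 'v) linform \<Rightarrow> ('k, 'v) linform" where
  "lin_neg f = lin_scale (- 1) f"

definition lin_subst :: "nat \<Rightarrow> ('k, 'v) linform \<Rightarrow> ('k, 'v) linform \<Rightarrow> ('k, 'v) linform" where
  "lin_subst k w f = lin_add (lin_scale (lin_coeff k f) w) (lin_drop k f)"

text \<open>The value of x_k at which f vanishes, as a form in the other variables (junk when the
  coefficient of x_k is 0, since inverse 0 = 0).\<close>

definition lin_solve :: "nat \<Rightarrow> ('k, 'v) linform \<Rightarrow> ('k, 'v) linform" where
  "lin_solve k f = lin_scale (- inverse (lin_coeff k f)) (lin_drop k f)"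

lemma lin_eval_split: "lin_eval f e = sc (lin_coeff k f) (e k) + lin_eval (lin_drop k f) e"
proof -
  have "sum_list (map (\<lambda>(j, a). sc a (e j)) cs) =
      sc (sum_list (map (\<lambda>(j, a). if j = k then a else 0) cs)) (e k) +
      sum_list (map (\<lambda>(j, a). sc a (e j)) (filter (\<lambda>(j, a). j \<noteq> k) cs))" for cs
    by (induction cs) (auto simp: sc_add_left add_ac)
  from this[of "fst f"] show ?thesis
    unfolding lin_eval_def lin_coeff_def lin_drop_def by (simp add: add_ac)
qed

lemma lin_eval_drop_upd: "lin_eval (lin_drop k f) (e(k := v)) = lin_eval (lin_drop k f) e"
proof -
  have "sum_list (map (\<lambda>(j, a). sc a ((e(k := v)) j)) (filter (\<lambda>(j, a). j \<noteq> k) cs)) =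
      sum_list (map (\<lambda>(j, a). sc a (e j)) (filter (\<lambda>(j, a). j \<noteq> k) cs))" for cs
    by (induction cs) auto
  then show ?thesis unfolding lin_eval_def lin_drop_def by simp
qed

lemma lin_eval_upd: "lin_eval f (e(k := v)) = sc (lin_coeff k f) v + lin_eval (lin_drop k f) e"
  using lin_eval_split[of f "e(k := v)" k] by (simp add: lin_eval_drop_upd)

lemma lin_eval_upd_0: "lin_eval f (e(k := v)) = sc (lin_coeff k f) v + lin_eval f (e(k := 0))"
  by (simp add: lin_eval_upd)

lemma lin_eval_scale: "lin_eval (lin_scale m f) e = sc m (lin_eval f e)"
proof -
  have "sum_list (map (\<lambda>(j, a). sc a (e j)) (map (\<lambda>(j, a). (j, m * a)) cs)) =
      sc m (sum_list (map (\<lambda>(j, a). sc a (e j)) cs))" for cs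
    by (induction cs) (auto simp: sc_add_right sc_mult)
  then show ?thesis unfolding lin_eval_def lin_scale_def by (simp add: sc_add_right)
qed

lemma lin_eval_add: "lin_eval (lin_add f g) e = lin_eval f e + lin_eval g e"
  unfolding lin_eval_def lin_add_def by (simp add: add_ac)

lemma lin_eval_neg: "lin_eval (lin_neg f) e = - lin_eval f e"
  unfolding lin_neg_def lin_eval_scale by (simp add: sc_minus_left sc_one)

lemma lin_eval_subst:
  "lin_eval (lin_subst k w f) e = sc (lin_coeff k f) (lin_eval w e) + lin_eval (lin_drop k f) e"
  unfolding lin_subst_def by (simp add: lin_eval_add lin_eval_scale)

lemma sc_lin_eval_solve:
  "lin_coeff k f \<noteq> 0 \<Longrightarrow> sc (lin_coeff k f) (lin_eval (lin_solve k f) e) = - lin_eval (lin_drop k f) e"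
  unfolding lin_solve_def by (simp add: lin_eval_scale sc_minus_left sc_minus_right sc_inverse_right)

definition atom_holds :: "(nat \<Rightarrow> 'v) \<Rightarrow> ('k, 'v) atom \<Rightarrow> bool" where
  "atom_holds e b \<longleftrightarrow> (if snd b then lin_eval (fst b) e = 0 else lin_eval (fst b) e < 0)"

definition dnf_holds :: "(nat \<Rightarrow> 'v) \<Rightarrow> ('k, 'v) dnf \<Rightarrow> bool" where
  "dnf_holds e D \<longleftrightarrow> (\<exists>c\<in>set D. \<forall>b\<in>set c. atom_holds e b)"

lemma dnf_holds_conj: "dnf_holds e (dnf_conj D1 D2) \<longleftrightarrow> dnf_holds e D1 \<and> dnf_holds e D2"
  unfolding dnf_holds_def dnf_conj_def by auto

lemma dnf_holds_concat: "dnf_holds e (concat Ds) \<longleftrightarrow> (\<exists>D\<in>set Ds. dnf_holds e D)"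
  unfolding dnf_holds_def by auto

definition dnf_neg_atom :: "('k, 'v) atom \<Rightarrow> ('k, 'v) dnf" where
  "dnf_neg_atom b = (if snd b then [[(fst b, False)], [(lin_neg (fst b), False)]]
                     else [[(fst b, True)], [(lin_neg (fst b), False)]])"

lemma dnf_holds_neg_atom: "dnf_holds e (dnf_neg_atom b) \<longleftrightarrow> \<not> atom_holds e b"
  unfolding dnf_holds_def dnf_neg_atom_def atom_holds_def
  by (auto simp: lin_eval_neg linorder_neq_iff)

fun dnf_neg :: "('k, 'v) dnf \<Rightarrow> ('k, 'v) dnf" where
  "dnf_neg [] = [[]]"
| "dnf_neg (c # D) = dnf_conj (concat (map dnf_neg_atom c)) (dnf_neg D)"

lemma dnf_holds_neg: "dnf_holds e (dnf_neg D) \<longleftrightarrow> \<not> dnf_holds e D"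
proof (induction D)
  case Nil
  then show ?case by (simp add: dnf_holds_def)
next
  case (Cons c D)
  have "dnf_holds e (concat (map dnf_neg_atom c)) \<longleftrightarrow> (\<exists>b\<in>set c. \<not> atom_holds e b)"
    by (auto simp: dnf_holds_concat dnf_holds_neg_atom)
  with Cons show ?case by (auto simp: dnf_holds_conj) (auto simp: dnf_holds_def)
qed

lemma atom_holds_upd:
  "atom_holds (e(k := v)) b \<longleftrightarrow>
    (if lin_coeff k (fst b) = 0 then atom_holds e (lin_drop k (fst b), snd b)
     else if snd b then v = lin_eval (lin_solve k (fst b)) e
     else if 0 < lin_coeff k (fst b) then v < lin_eval (lin_solve k (fst b)) e
     else lin_eval (lin_solve k (fst b)) e < v)"
proof -
  define a where "a = lin_coeff k (fst b)"
  define w where "w = lin_eval (lin_solve k (fst b)) e"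
  define g where "g = lin_eval (lin_drop k (fst b)) e"
  have val: "lin_eval (fst b) (e(k := v)) = sc a v + g"
    unfolding a_def g_def by (rule lin_eval_upd)
  show ?thesis
  proof (cases "a = 0")
    case True
    then show ?thesis using val unfolding a_def[symmetric] atom_holds_def g_def by simp
  next
    case False
    have "sc a w = - g" unfolding a_def w_def g_def using False a_def sc_lin_eval_solve by blast
    then have "lin_eval (fst b) (e(k := v)) = sc a (v - w)"
      using val by (simp add: sc_diff_right)
    moreover have "sc a (v - w) = 0 \<longleftrightarrow> v = w" using sc_eq_0_iff[OF False] by simp
    moreover have "sc a (v - w) < 0 \<longleftrightarrow> (0 < a \<and> v < w) \<or> (a < 0 \<and> w < v)"
      using sc_less_0_iff[OF False] by simp
    ultimately show ?thesis
      unfolding atom_holds_def a_def[symmetric] w_def[symmetric] using False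
      by (auto simp: linorder_neq_iff)
  qed
qed

lemma atom_holds_subst:
  "atom_holds e (lin_subst k w (fst b), snd b) \<longleftrightarrow> atom_holds (e(k := lin_eval w e)) b"
  unfolding atom_holds_def by (simp add: lin_eval_subst lin_eval_upd)

end

context nontrivial_ordered_vs
begin

definition conj_lower_bounds :: "nat \<Rightarrow> ('k, 'v) atom list \<Rightarrow> ('k, 'v) linform list" where
  "conj_lower_bounds k c =
     map (\<lambda>b. lin_solve k (fst b)) (filter (\<lambda>b. \<not> snd b \<and> lin_coeff k (fst b) < 0) c)"

definition conj_upper_bounds :: "nat \<Rightarrow> ('k, 'v) atom list \<Rightarrow> ('k, 'v) linform list" where
  "conj_upper_bounds k c =
     map (\<lambda>b. lin_solve k (fst b)) (filter (\<lambda>b. \<not> snd b \<and> 0 < lin_coeff k (fst b)) c)"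

lemma mem_conj_lower_bounds:
  "l \<in> set (conj_lower_bounds k c) \<longleftrightarrow>
    (\<exists>b\<in>set c. \<not> snd b \<and> lin_coeff k (fst b) < 0 \<and> l = lin_solve k (fst b))"
  unfolding conj_lower_bounds_def by auto

lemma mem_conj_upper_bounds:
  "u \<in> set (conj_upper_bounds k c) \<longleftrightarrow>
    (\<exists>b\<in>set c. \<not> snd b \<and> 0 < lin_coeff k (fst b) \<and> u = lin_solve k (fst b))"
  unfolding conj_upper_bounds_def by auto

definition qe_conj :: "nat \<Rightarrow> ('k, 'v) atom list \<Rightarrow> ('k, 'v) dnf" where
  "qe_conj k c = (case find (\<lambda>b. snd b \<and> lin_coeff k (fst b) \<noteq> 0) c of
     Some a \<Rightarrow> [map (\<lambda>b. (lin_subst k (lin_solve k (fst a)) (fst b), snd b)) c]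
   | None \<Rightarrow> [map (\<lambda>b. (lin_drop k (fst b), snd b)) (filter (\<lambda>b. lin_coeff k (fst b) = 0) c) @
             concat (map (\<lambda>l. map (\<lambda>u. (lin_add l (lin_neg u), False)) (conj_upper_bounds k c))
               (conj_lower_bounds k c))])"

lemma qe_conj_with_equation:
  assumes "a \<in> set c" "snd a" "lin_coeff k (fst a) \<noteq> 0"
  shows "(\<exists>v. \<forall>b\<in>set c. atom_holds (e(k := v)) b) \<longleftrightarrow>
    (\<forall>b\<in>set c. atom_holds (e(k := lin_eval (lin_solve k (fst a)) e)) b)"
proof
  assume "\<exists>v. \<forall>b\<in>set c. atom_holds (e(k := v)) b"
  then obtain v where v: "\<forall>b\<in>set c. atom_holds (e(k := v)) b" by blast
  then have "v = lin_eval (lin_solve k (fst a)) e"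
    using assms atom_holds_upd[of e k v a] by simp
  then show "\<forall>b\<in>set c. atom_holds (e(k := lin_eval (lin_solve k (fst a)) e)) b" using v by simp
qed blast

lemma qe_conj_without_equation:
  assumes no_eq: "\<And>b. b \<in> set c \<Longrightarrow> snd b \<Longrightarrow> lin_coeff k (fst b) = 0"
  shows "(\<forall>b\<in>set c. atom_holds (e(k := v)) b) \<longleftrightarrow>
     (\<forall>b\<in>set c. lin_coeff k (fst b) = 0 \<longrightarrow> atom_holds e (lin_drop k (fst b), snd b)) \<and>
     (\<forall>l\<in>set (conj_lower_bounds k c). lin_eval l e < v) \<and>
     (\<forall>u\<in>set (conj_upper_bounds k c). v < lin_eval u e)"
proof (intro iffI conjI ballI impI)
  assume h: "\<forall>b\<in>set c. atom_holds (e(k := v)) b"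
  show "atom_holds e (lin_drop k (fst b), snd b)" if "b \<in> set c" "lin_coeff k (fst b) = 0" for b
    using that h atom_holds_upd[of e k v b] by simp
  show "lin_eval l e < v" if l: "l \<in> set (conj_lower_bounds k c)" for l
  proof -
    obtain b where "b \<in> set c" "\<not> snd b" "lin_coeff k (fst b) < 0" "l = lin_solve k (fst b)"
      using l unfolding mem_conj_lower_bounds by blast
    then show ?thesis using h atom_holds_upd[of e k v b] by auto
  qed
  show "v < lin_eval u e" if u: "u \<in> set (conj_upper_bounds k c)" for u
  proof -
    obtain b where "b \<in> set c" "\<not> snd b" "0 < lin_coeff k (fst b)" "u = lin_solve k (fst b)"
      using u unfolding mem_conj_upper_bounds by blast
    then show ?thesis using h atom_holds_upd[of e k v b] by auto
  qed
next
  fix b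
  assume h: "(\<forall>b\<in>set c. lin_coeff k (fst b) = 0 \<longrightarrow> atom_holds e (lin_drop k (fst b), snd b)) \<and>
     (\<forall>l\<in>set (conj_lower_bounds k c). lin_eval l e < v) \<and>
     (\<forall>u\<in>set (conj_upper_bounds k c). v < lin_eval u e)"
    and b: "b \<in> set c"
  consider "lin_coeff k (fst b) = 0" | "\<not> snd b" "0 < lin_coeff k (fst b)"
    | "\<not> snd b" "lin_coeff k (fst b) < 0"
    using no_eq[OF b] by (meson linorder_neq_iff)
  then show "atom_holds (e(k := v)) b"
  proof cases
    case 2
    then have "lin_solve k (fst b) \<in> set (conj_upper_bounds k c)"
      using b unfolding mem_conj_upper_bounds by blast
    then show ?thesis using h 2 atom_holds_upd[of e k v b] by auto
  next
    case 3
    then have "lin_solve k (fst b) \<in> set (conj_lower_bounds k c)"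
      using b unfolding mem_conj_lower_bounds by blast
    then show ?thesis using h 3 atom_holds_upd[of e k v b] by auto
  qed (use h b atom_holds_upd[of e k v b] in simp)
qed

lemma qe_conj_correct:
  "(\<exists>v. \<forall>b\<in>set c. atom_holds (e(k := v)) b) \<longleftrightarrow> dnf_holds e (qe_conj k c)"
proof (cases "find (\<lambda>b. snd b \<and> lin_coeff k (fst b) \<noteq> 0) c")
  case (Some a)
  then have "a \<in> set c" "snd a" "lin_coeff k (fst a) \<noteq> 0" by (auto simp: find_Some_iff)
  then show ?thesis
    unfolding qe_conj_with_equation[OF \<open>a \<in> set c\<close> \<open>snd a\<close> \<open>lin_coeff k (fst a) \<noteq> 0\<close>]
    unfolding qe_conj_def Some dnf_holds_def by (auto simp: atom_holds_subst)
next
  case None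
  then have no_eq: "\<And>b. b \<in> set c \<Longrightarrow> snd b \<Longrightarrow> lin_coeff k (fst b) = 0"
    by (auto simp: find_None_iff)
  let ?Z = "\<forall>b\<in>set c. lin_coeff k (fst b) = 0 \<longrightarrow> atom_holds e (lin_drop k (fst b), snd b)"
  let ?L = "(\<lambda>l. lin_eval l e) ` set (conj_lower_bounds k c)"
  let ?U = "(\<lambda>u. lin_eval u e) ` set (conj_upper_bounds k c)"
  have "(\<forall>b\<in>set c. atom_holds (e(k := v)) b) \<longleftrightarrow> ?Z \<and> (\<forall>l\<in>?L. l < v) \<and> (\<forall>u\<in>?U. v < u)"
    for v using qe_conj_without_equation[OF no_eq, where e = e and v = v] by simp
  then have "(\<exists>v. \<forall>b\<in>set c. atom_holds (e(k := v)) b) \<longleftrightarrow>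
      ?Z \<and> (\<exists>v. (\<forall>l\<in>?L. l < v) \<and> (\<forall>u\<in>?U. v < u))"
    by simp
  also have "\<dots> \<longleftrightarrow> ?Z \<and> (\<forall>l\<in>?L. \<forall>u\<in>?U. l < u)"
  proof -
    have "(\<exists>v. (\<forall>l\<in>?L. l < v) \<and> (\<forall>u\<in>?U. v < u)) \<longleftrightarrow> (\<forall>l\<in>?L. \<forall>u\<in>?U. l < u)"
    proof
      assume "\<exists>v. (\<forall>l\<in>?L. l < v) \<and> (\<forall>u\<in>?U. v < u)"
      then show "\<forall>l\<in>?L. \<forall>u\<in>?U. l < u" by (meson order_less_trans)
    qed (rule exists_between_finite; simp)
    then show ?thesis by simp
  qed
  also have "\<dots> \<longleftrightarrow> dnf_holds e (qe_conj k c)"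
  proof -
    have "dnf_holds e (qe_conj k c) \<longleftrightarrow> ?Z \<and> (\<forall>l\<in>set (conj_lower_bounds k c).
        \<forall>u\<in>set (conj_upper_bounds k c). atom_holds e (lin_add l (lin_neg u), False))"
      unfolding qe_conj_def None dnf_holds_def by auto
    moreover have "atom_holds e (lin_add l (lin_neg u), False) \<longleftrightarrow> lin_eval l e < lin_eval u e"
      for l u by (simp add: atom_holds_def lin_eval_add lin_eval_neg)
    ultimately show ?thesis by simp
  qed
  finally show ?thesis .
qed

definition qe_dnf :: "nat \<Rightarrow> ('k, 'v) dnf \<Rightarrow> ('k, 'v) dnf" where
  "qe_dnf k D = concat (map (qe_conj k) D)"

lemma qe_dnf_correct: "dnf_holds e (qe_dnf k D) \<longleftrightarrow> (\<exists>v. dnf_holds (e(k := v)) D)"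
proof -
  have "dnf_holds e (qe_dnf k D) \<longleftrightarrow> (\<exists>c\<in>set D. dnf_holds e (qe_conj k c))"
    unfolding qe_dnf_def dnf_holds_concat by auto
  also have "\<dots> \<longleftrightarrow> (\<exists>c\<in>set D. \<exists>v. \<forall>b\<in>set c. atom_holds (e(k := v)) b)"
    using qe_conj_correct by blast
  finally show ?thesis unfolding dnf_holds_def by blast
qed

primrec lin_of_tm :: "('k, 'v) tm \<Rightarrow> ('k, 'v) linform" where
  "lin_of_tm (Var i) = ([(i, 1)], 0)"
| "lin_of_tm (Cst c) = ([], c)"
| "lin_of_tm Zero = ([], 0)"
| "lin_of_tm (Plus s t) = lin_add (lin_of_tm s) (lin_of_tm t)"
| "lin_of_tm (Scal a t) = lin_scale a (lin_of_tm t)"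

lemma lin_eval_lin_of_tm: "lin_eval (lin_of_tm t) e = eval_tm sc e t"
  by (induction t) (simp_all add: lin_eval_add lin_eval_scale, simp_all add: lin_eval_def sc_one)

primrec dnf_of_fm :: "('k, 'v) fm \<Rightarrow> ('k, 'v) dnf" where
  "dnf_of_fm (Eq s t) = [[(lin_add (lin_of_tm s) (lin_neg (lin_of_tm t)), True)]]"
| "dnf_of_fm (Less s t) = [[(lin_add (lin_of_tm s) (lin_neg (lin_of_tm t)), False)]]"
| "dnf_of_fm (Neg f) = dnf_neg (dnf_of_fm f)"
| "dnf_of_fm (Conj f g) = dnf_conj (dnf_of_fm f) (dnf_of_fm g)"
| "dnf_of_fm (Ex i f) = qe_dnf i (dnf_of_fm f)"

lemma dnf_holds_dnf_of_fm: "dnf_holds e (dnf_of_fm \<phi>) \<longleftrightarrow> sat sc e \<phi>"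
proof (induction \<phi> arbitrary: e)
  case (Eq s t)
  then show ?case by (simp add: dnf_holds_def atom_holds_def lin_eval_add lin_eval_neg lin_eval_lin_of_tm)
next
  case (Less s t)
  then show ?case by (simp add: dnf_holds_def atom_holds_def lin_eval_add lin_eval_neg lin_eval_lin_of_tm)
next
  case (Neg f)
  then show ?case by (simp add: dnf_holds_neg)
next
  case (Conj f g)
  then show ?case by (simp add: dnf_holds_conj)
next
  case (Ex i f)
  then show ?case by (simp add: qe_dnf_correct fun_upd_def)
qed

lemma dnf_exists_vars:
  assumes "finite K"
  shows "\<exists>D'. \<forall>e. dnf_holds e D' \<longleftrightarrow> (\<exists>e'. (\<forall>j. j \<notin> K \<longrightarrow> e' j = e j) \<and> dnf_holds e' D)"
  using assms
proof induction
  case empty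
  have "(\<forall>j. e' j = e j) \<longleftrightarrow> e' = e" for e' e :: "nat \<Rightarrow> 'v" by auto
  then show ?case by auto
next
  case (insert k K)
  then obtain D1 where D1: "\<And>e. dnf_holds e D1 \<longleftrightarrow>
      (\<exists>e'. (\<forall>j. j \<notin> K \<longrightarrow> e' j = e j) \<and> dnf_holds e' D)" by blast
  have "dnf_holds e (qe_dnf k D1) \<longleftrightarrow>
      (\<exists>e'. (\<forall>j. j \<notin> insert k K \<longrightarrow> e' j = e j) \<and> dnf_holds e' D)" for e
  proof
    assume "dnf_holds e (qe_dnf k D1)"
    then obtain v e' where e': "\<forall>j. j \<notin> K \<longrightarrow> e' j = (e(k := v)) j" "dnf_holds e' D"
      using qe_dnf_correct D1 by blast
    then have "\<forall>j. j \<notin> insert k K \<longrightarrow> e' j = e j" by auto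
    then show "\<exists>e'. (\<forall>j. j \<notin> insert k K \<longrightarrow> e' j = e j) \<and> dnf_holds e' D"
      using e'(2) by blast
  next
    assume "\<exists>e'. (\<forall>j. j \<notin> insert k K \<longrightarrow> e' j = e j) \<and> dnf_holds e' D"
    then obtain e' where "\<forall>j. j \<notin> insert k K \<longrightarrow> e' j = e j" "dnf_holds e' D" by blast
    then have "dnf_holds (e(k := e' k)) D1" using D1 by auto
    then show "dnf_holds e (qe_dnf k D1)" using qe_dnf_correct by blast
  qed
  then show ?case by blast
qed

end

lemma strict_mono_surj_isCont:
  fixes g :: "'a::linorder_topology \<Rightarrow> 'b::linorder_topology"
  assumes mono: "\<And>x y. x < y \<Longrightarrow> g x < g y" and "surj g"
  shows "isCont g t"
  unfolding isCont_def
proof (rule order_tendstoI)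
  fix a assume "a < g t"
  obtain a' where a': "a = g a'" using \<open>surj g\<close> by (metis surj_def)
  then have "a' < t" using \<open>a < g t\<close> mono by (metis linorder_neq_iff order_less_asym)
  then have "eventually (\<lambda>x. a' < x) (at t)" using order_tendstoD(1)[OF tendsto_ident_at] by blast
  then show "eventually (\<lambda>x. a < g x) (at t)" using a' mono by (auto elim: eventually_mono)
next
  fix a assume "g t < a"
  obtain a' where a': "a = g a'" using \<open>surj g\<close> by (metis surj_def)
  then have "t < a'" using \<open>g t < a\<close> mono by (metis linorder_neq_iff order_less_asym)
  then have "eventually (\<lambda>x. x < a') (at t)" using order_tendstoD(2)[OF tendsto_ident_at] by blast
  then show "eventually (\<lambda>x. g x < a) (at t)" using a' mono by (auto elim: eventually_mono)
qed

lemma strict_antimono_surj_isCont: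
  fixes g :: "'a::linorder_topology \<Rightarrow> 'b::linorder_topology"
  assumes anti: "\<And>x y. x < y \<Longrightarrow> g y < g x" and "surj g"
  shows "isCont g t"
  unfolding isCont_def
proof (rule order_tendstoI)
  fix a assume "a < g t"
  obtain a' where a': "a = g a'" using \<open>surj g\<close> by (metis surj_def)
  then have "t < a'" using \<open>a < g t\<close> anti by (metis linorder_neq_iff order_less_asym)
  then have "eventually (\<lambda>x. x < a') (at t)" using order_tendstoD(2)[OF tendsto_ident_at] by blast
  then show "eventually (\<lambda>x. a < g x) (at t)" using a' anti by (auto elim: eventually_mono)
next
  fix a assume "g t < a"
  obtain a' where a': "a = g a'" using \<open>surj g\<close> by (metis surj_def)
  then have "a' < t" using \<open>g t < a\<close> anti by (metis linorder_neq_iff order_less_asym)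
  then have "eventually (\<lambda>x. a' < x) (at t)" using order_tendstoD(1)[OF tendsto_ident_at] by blast
  then show "eventually (\<lambda>x. g x < a) (at t)" using a' anti by (auto elim: eventually_mono)
qed

context ordered_vs
begin

lemma continuous_on_affine: "continuous_on S (\<lambda>t. sc s t + c)"
proof (cases "s = 0")
  case True
  then show ?thesis by (simp add: continuous_on_const)
next
  case False
  have surj: "surj (\<lambda>t. sc s t + c)"
  proof (rule surjI[of _ "\<lambda>z. sc (inverse s) (z - c)"])
    show "sc s (sc (inverse s) (z - c)) + c = z" for z using False by (simp add: sc_inverse_right)
  qed
  have "isCont (\<lambda>t. sc s t + c) t" for t
  proof (cases "0 < s")
    case True
    then show ?thesis by (intro strict_mono_surj_isCont[OF _ surj]) (simp add: sc_strict_mono)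
  next
    case False
    then have "s < 0" using \<open>s \<noteq> 0\<close> by (simp add: linorder_neq_iff)
    then show ?thesis by (intro strict_antimono_surj_isCont[OF _ surj]) (simp add: sc_strict_antimono)
  qed
  then show ?thesis by (simp add: continuous_at_imp_continuous_on)
qed

lemma increment_bound_trans:
  fixes h :: "'v \<Rightarrow> 'v"
  assumes "h b - h a \<le> sc C (b - a) \<and> h a - h b \<le> sc C (b - a)"
    and "h c - h b \<le> sc C (c - b) \<and> h b - h c \<le> sc C (c - b)"
  shows "h c - h a \<le> sc C (c - a) \<and> h a - h c \<le> sc C (c - a)"
proof -
  have split: "sc C (c - b) + sc C (b - a) = sc C (c - a)" by (simp add: sc_add_right[symmetric])
  have "h c - h a = (h c - h b) + (h b - h a)" "h a - h c = (h b - h c) + (h a - h b)"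
    by simp_all
  moreover have "(h c - h b) + (h b - h a) \<le> sc C (c - b) + sc C (b - a)"
    "(h b - h c) + (h a - h b) \<le> sc C (c - b) + sc C (b - a)"
    using assms by (intro add_mono; simp)+
  ultimately show ?thesis unfolding split by simp
qed

lemma increment_bound_from_gaps:
  fixes h :: "'v \<Rightarrow> 'v"
  assumes "finite W"
    and gap: "\<And>p u. 0 \<le> p \<Longrightarrow> p < u \<Longrightarrow> u \<le> q \<Longrightarrow> \<forall>w\<in>W. w \<le> p \<or> u \<le> w \<Longrightarrow>
      h u - h p \<le> sc C (u - p) \<and> h p - h u \<le> sc C (u - p)"
    and "u \<in> {0..q}"
  shows "h u - h 0 \<le> sc C u \<and> h 0 - h u \<le> sc C u"
proof -
  let ?W = "insert 0 W"
  have "card {w\<in>?W. w < u} = n \<Longrightarrow> u \<in> {0..q} \<Longrightarrow> h u - h 0 \<le> sc C u \<and> h 0 - h u \<le> sc C u"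
    for n u
  proof (induction n arbitrary: u rule: less_induct)
    case (less n u)
    show ?case
    proof (cases "u = 0")
      case False
      then have "0 < u" using less.prems(2) by auto
      define S where "S = {w\<in>?W. w < u}"
      have "finite S" "0 \<in> S" unfolding S_def using \<open>finite W\<close> \<open>0 < u\<close> by auto
      define p where "p = Max S"
      have "p \<in> S" unfolding p_def using \<open>finite S\<close> \<open>0 \<in> S\<close> by (auto intro: Max_in)
      then have "p < u" unfolding S_def by simp
      have "0 \<le> p" unfolding p_def using \<open>finite S\<close> \<open>0 \<in> S\<close> by simp
      have "{w\<in>?W. w < p} \<subseteq> S" unfolding S_def using \<open>p < u\<close> by (blast intro: order.strict_trans)
      then have "{w\<in>?W. w < p} \<subset> S" using \<open>p \<in> S\<close> by blast
      then have "card {w\<in>?W. w < p} < n"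
        using psubset_card_mono[OF \<open>finite S\<close>] less.prems(1) unfolding S_def by simp
      moreover have "p \<in> {0..q}" using \<open>0 \<le> p\<close> \<open>p < u\<close> less.prems(2) by auto
      ultimately have IH: "h p - h 0 \<le> sc C p \<and> h 0 - h p \<le> sc C p"
        using less.IH by blast
      have "\<forall>w\<in>W. w \<le> p \<or> u \<le> w"
      proof (intro ballI)
        fix w assume "w \<in> W"
        show "w \<le> p \<or> u \<le> w"
        proof (cases "w < u")
          case True
          then have "w \<in> S" unfolding S_def using \<open>w \<in> W\<close> by simp
          then show ?thesis unfolding p_def using \<open>finite S\<close> by simp
        qed (simp add: not_less)
      qed
      then have step: "h u - h p \<le> sc C (u - p) \<and> h p - h u \<le> sc C (u - p)"
        using gap[OF \<open>0 \<le> p\<close> \<open>p < u\<close>] less.prems(2) by simp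
      have "h u - h 0 \<le> sc C (u - 0) \<and> h 0 - h u \<le> sc C (u - 0)"
        by (rule increment_bound_trans[where b = p]) (use IH step in simp_all)
      then show ?thesis by simp
    qed simp
  qed
  then show ?thesis using \<open>u \<in> {0..q}\<close> by blast
qed

end

context nontrivial_ordered_vs
begin

lemma islimpt_greaterThanLessThan:
  fixes p u x :: 'v
  assumes "p < u" "x \<in> {p..u}"
  shows "x islimpt {p<..<u}"
proof (rule islimptI)
  fix T assume "x \<in> T" "open T"
  show "\<exists>y\<in>{p<..<u}. y \<in> T \<and> y \<noteq> x"
  proof (cases "x < u")
    case True
    then obtain b where "x < b" "{x..<b} \<subseteq> T"
      using open_right[of T x u] \<open>open T\<close> \<open>x \<in> T\<close> by blast
    moreover obtain y where "x < y" "y < min b u" using exists_between[of x "min b u"] \<open>x < b\<close> True by auto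
    ultimately have "y \<in> {p<..<u}" "y \<in> T" "y \<noteq> x" using assms by auto
    then show ?thesis by blast
  next
    case False
    then have "x = u" using assms by simp
    then obtain b where "b < u" "{b<..u} \<subseteq> T"
      using open_left[of T x p] \<open>open T\<close> \<open>x \<in> T\<close> assms by blast
    moreover obtain y where "max b p < y" "y < u" using exists_between[of "max b p" u] \<open>b < u\<close> assms by auto
    ultimately have "y \<in> {p<..<u}" "y \<in> T" "y \<noteq> x" using \<open>x = u\<close> by auto
    then show ?thesis by blast
  qed
qed

lemma conj_holds_shift_up:
  assumes holds: "\<forall>b\<in>set c. atom_holds (e(k := y)) b"
    and no_eq: "\<forall>b\<in>set c. snd b \<longrightarrow> lin_coeff k (fst b) = 0"
  shows "\<exists>\<delta>>0. \<forall>b\<in>set c. atom_holds (e(k := y + \<delta>)) b"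
proof -
  have shift: "lin_eval f (e(k := y + d)) = sc (lin_coeff k f) d + lin_eval f (e(k := y))" for f d
    by (simp add: lin_eval_upd sc_add_right add_ac)
  let ?P = "{b\<in>set c. \<not> snd b \<and> 0 < lin_coeff k (fst b)}"
  let ?B = "(\<lambda>b. sc (inverse (lin_coeff k (fst b))) (- lin_eval (fst b) (e(k := y)))) ` ?P"
  have "\<forall>w\<in>?B. 0 < w"
  proof
    fix w assume "w \<in> ?B"
    then obtain b where b: "b \<in> ?P" and w: "w = sc (inverse (lin_coeff k (fst b))) (- lin_eval (fst b) (e(k := y)))"
      by blast
    have "lin_eval (fst b) (e(k := y)) < 0" using holds b unfolding atom_holds_def by auto
    moreover have "lin_coeff k (fst b) \<noteq> 0" using b by auto
    then have "sc (lin_coeff k (fst b)) w = - lin_eval (fst b) (e(k := y))"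
      using w by (simp add: sc_inverse_right)
    ultimately show "0 < w" using sc_less_cancel_pos[of "lin_coeff k (fst b)" 0 w] b by simp
  qed
  then have "\<exists>\<delta>. (\<forall>a\<in>{0}. a < \<delta>) \<and> (\<forall>w\<in>?B. \<delta> < w)"
    by (intro exists_between_finite) auto
  then obtain \<delta> where "0 < \<delta>" and \<delta>: "\<forall>w\<in>?B. \<delta> < w" by auto
  have "atom_holds (e(k := y + \<delta>)) b" if b: "b \<in> set c" for b
  proof (cases "snd b")
    case True
    then show ?thesis using holds b no_eq shift unfolding atom_holds_def by simp
  next
    case False
    let ?a = "lin_coeff k (fst b)" and ?v = "lin_eval (fst b) (e(k := y))"
    have "?v < 0" using holds b False unfolding atom_holds_def by auto
    have "sc ?a \<delta> + ?v < 0"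
    proof (cases "0 < ?a")
      case True
      then have "b \<in> ?P" using b \<open>\<not> snd b\<close> by simp
      then have "sc (inverse ?a) (- ?v) \<in> ?B" by (rule imageI)
      then have "\<delta> < sc (inverse ?a) (- ?v)" using \<delta> by blast
      then have "sc ?a \<delta> < sc ?a (sc (inverse ?a) (- ?v))" by (rule sc_strict_mono[OF True])
      then have "sc ?a \<delta> < - ?v" using True by (simp add: sc_inverse_right)
      then have "sc ?a \<delta> + ?v < - ?v + ?v" by (rule add_strict_right_mono)
      then show ?thesis by simp
    next
      case False
      have "sc ?a \<delta> \<le> 0"
      proof (cases "?a = 0")
        case False
        then have "?a < 0" using \<open>\<not> 0 < ?a\<close> by (simp add: linorder_neq_iff)
        then show ?thesis using sc_strict_antimono[of ?a 0 \<delta>] \<open>0 < \<delta>\<close> by simp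
      qed simp
      then show ?thesis using \<open>?v < 0\<close> by (simp add: add_nonpos_neg)
    qed
    then show ?thesis using False shift unfolding atom_holds_def by simp
  qed
  then show ?thesis using \<open>0 < \<delta>\<close> by blast
qed

end

definition dnf_slope_bound ::
    "('k::{division_ring,linordered_ring_strict}, 'v) dnf \<Rightarrow> nat \<Rightarrow> nat \<Rightarrow> 'k" where
  "dnf_slope_bound D kT kY =
     (\<Sum>b\<in>set (concat D). \<bar>inverse (lin_coeff kY (fst b)) * lin_coeff kT (fst b)\<bar>)"

context nontrivial_ordered_vs
begin

lemma atom_holds_upd_between_thresholds:
  assumes "lin_eval (lin_solve k (fst b)) e \<le> p \<or> u \<le> lin_eval (lin_solve k (fst b)) e"
    and "p < t" "t < u" "p < t'" "t' < u"
  shows "atom_holds (e(k := t)) b \<longleftrightarrow> atom_holds (e(k := t')) b"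
  using assms unfolding atom_holds_upd by auto

definition graph_thresholds :: "('k, 'v) dnf \<Rightarrow> nat \<Rightarrow> nat \<Rightarrow> (nat \<Rightarrow> 'v) \<Rightarrow> 'v set" where
  "graph_thresholds D kT kY e =
     (\<lambda>b. lin_eval (lin_solve kT (fst b)) e) ` set (concat (qe_dnf kY D))"

lemma conj_solvable_between_thresholds:
  assumes "c \<in> set D" and gap: "\<forall>w\<in>graph_thresholds D kT kY e. w \<le> p \<or> u \<le> w"
    and "p < m" "m < u" "p < t" "t < u"
    and "\<forall>b\<in>set c. atom_holds (e(kT := m, kY := y)) b"
  shows "\<exists>y'. \<forall>b\<in>set c. atom_holds (e(kT := t, kY := y')) b"
proof -
  have "dnf_holds (e(kT := m)) (qe_conj kY c)"
    using assms(7) qe_conj_correct[of c "e(kT := m)" kY] by blast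
  then obtain c' where "c' \<in> set (qe_conj kY c)" "\<forall>a\<in>set c'. atom_holds (e(kT := m)) a"
    unfolding dnf_holds_def by blast
  moreover have "atom_holds (e(kT := m)) a \<longleftrightarrow> atom_holds (e(kT := t)) a"
    if "a \<in> set c'" "c' \<in> set (qe_conj kY c)" for a c'
  proof (rule atom_holds_upd_between_thresholds)
    have "a \<in> set (concat (qe_dnf kY D))" using that \<open>c \<in> set D\<close> unfolding qe_dnf_def by auto
    then show "lin_eval (lin_solve kT (fst a)) e \<le> p \<or> u \<le> lin_eval (lin_solve kT (fst a)) e"
      using gap unfolding graph_thresholds_def by blast
  qed (use assms(3-6) in auto)
  ultimately have "dnf_holds (e(kT := t)) (qe_conj kY c)" unfolding dnf_holds_def by blast
  then show ?thesis using qe_conj_correct[of c "e(kT := t)" kY] by blast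
qed

context
  fixes D :: "('k, 'v) dnf" and kT kY :: nat and e :: "nat \<Rightarrow> 'v" and q :: 'v and h :: "'v \<Rightarrow> 'v"
  assumes vars_distinct: "kT \<noteq> kY"
    and graph: "\<And>t y. dnf_holds (e(kT := t, kY := y)) D \<longleftrightarrow> t \<in> {0..q} \<and> y = h t"
begin

lemma lin_eval_graph_env:
  "lin_eval f (e(kT := t, kY := y)) =
    sc (lin_coeff kY f) y + (sc (lin_coeff kT f) t + lin_eval f (e(kT := 0, kY := 0)))"
proof -
  have "lin_eval f (e(kT := t, kY := y)) = sc (lin_coeff kY f) y + lin_eval f ((e(kY := 0))(kT := t))"
    using lin_eval_upd_0[of f "e(kT := t)" kY y] vars_distinct by (simp add: fun_upd_twist)
  also have "lin_eval f ((e(kY := 0))(kT := t)) =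
      sc (lin_coeff kT f) t + lin_eval f (e(kT := 0, kY := 0))"
    using lin_eval_upd_0[of f "e(kY := 0)" kT t] vars_distinct by (simp add: fun_upd_twist)
  finally show ?thesis .
qed

lemma graph_conj_has_equation:
  assumes "c \<in> set D" and holds: "\<forall>b\<in>set c. atom_holds (e(kT := t, kY := h t)) b"
  shows "\<exists>b\<in>set c. snd b \<and> lin_coeff kY (fst b) \<noteq> 0"
proof (rule ccontr)
  assume "\<not> ?thesis"
  then obtain \<delta> where "0 < \<delta>" "\<forall>b\<in>set c. atom_holds (e(kT := t, kY := h t + \<delta>)) b"
    using conj_holds_shift_up[OF holds] by blast
  then have "dnf_holds (e(kT := t, kY := h t + \<delta>)) D"
    using \<open>c \<in> set D\<close> unfolding dnf_holds_def by blast
  then show False using graph \<open>0 < \<delta>\<close> by simp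
qed

lemma graph_eq_affine_by_equation:
  assumes "c \<in> set D" "b \<in> set c" "snd b" and \<beta>: "lin_coeff kY (fst b) \<noteq> 0"
    and holds: "\<forall>b\<in>set c. atom_holds (e(kT := t, kY := y)) b"
  shows "h t = sc (- (inverse (lin_coeff kY (fst b)) * lin_coeff kT (fst b))) t
      + - sc (inverse (lin_coeff kY (fst b))) (lin_eval (fst b) (e(kT := 0, kY := 0)))"
proof -
  let ?\<alpha> = "lin_coeff kT (fst b)" and ?\<beta> = "lin_coeff kY (fst b)"
    and ?\<kappa> = "lin_eval (fst b) (e(kT := 0, kY := 0))"
  have "dnf_holds (e(kT := t, kY := y)) D" using assms(1) holds unfolding dnf_holds_def by blast
  then have "y = h t" using graph by simp
  have "lin_eval (fst b) (e(kT := t, kY := y)) = 0"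
    using holds assms(2,3) unfolding atom_holds_def by auto
  then have "sc ?\<beta> y + (sc ?\<alpha> t + ?\<kappa>) = 0" using lin_eval_graph_env[of "fst b" t y] by simp
  then have "sc ?\<beta> y = - (sc ?\<alpha> t + ?\<kappa>)" by (simp only: eq_neg_iff_add_eq_0)
  then have "sc (inverse ?\<beta>) (sc ?\<beta> y) = sc (inverse ?\<beta>) (- (sc ?\<alpha> t + ?\<kappa>))" by simp
  then have "y = sc (inverse ?\<beta>) (- (sc ?\<alpha> t + ?\<kappa>))" by (simp only: sc_inverse_left[OF \<beta>])
  also have "\<dots> = sc (- (inverse ?\<beta> * ?\<alpha>)) t + - sc (inverse ?\<beta>) ?\<kappa>"
    by (simp add: sc_minus_right sc_add_right sc_diff_right sc_mult sc_minus_left add_ac)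
  finally show ?thesis using \<open>y = h t\<close> by simp
qed

lemma graph_affine_between_thresholds:
  assumes cont: "continuous_on {0..q} h"
    and "0 \<le> p" "p < u" "u \<le> q" and gap: "\<forall>w\<in>graph_thresholds D kT kY e. w \<le> p \<or> u \<le> w"
  shows "\<exists>s c0. \<bar>s\<bar> \<le> dnf_slope_bound D kT kY \<and> (\<forall>t\<in>{p..u}. h t = sc s t + c0)"
proof -
  obtain m where "p < m" "m < u" using exists_between \<open>p < u\<close> by blast
  then have "0 \<le> m" "m \<le> q" using \<open>0 \<le> p\<close> \<open>u \<le> q\<close> by order+
  then have "dnf_holds (e(kT := m, kY := h m)) D" using graph by simp
  then obtain c where c: "c \<in> set D" "\<forall>b\<in>set c. atom_holds (e(kT := m, kY := h m)) b"
    unfolding dnf_holds_def by blast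
  then obtain b where b: "b \<in> set c" "snd b" "lin_coeff kY (fst b) \<noteq> 0"
    using graph_conj_has_equation by blast
  define s where "s = - (inverse (lin_coeff kY (fst b)) * lin_coeff kT (fst b))"
  define c0 where "c0 = - sc (inverse (lin_coeff kY (fst b))) (lin_eval (fst b) (e(kT := 0, kY := 0)))"
  have inside: "h t = sc s t + c0" if t: "t \<in> {p<..<u}" for t
  proof -
    obtain y where "\<forall>a\<in>set c. atom_holds (e(kT := t, kY := y)) a"
      using conj_solvable_between_thresholds[OF c(1) gap \<open>p < m\<close> \<open>m < u\<close> _ _ c(2)] t by auto
    then show ?thesis unfolding s_def c0_def using graph_eq_affine_by_equation c(1) b by blast
  qed
  have "h t = sc s t + c0" if "t \<in> {p..u}" for t
  proof (rule continuous_on_eq_at_islimpt[of "{p..u}" h "\<lambda>t. sc s t + c0" "{p<..<u}"])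
    show "continuous_on {p..u} h" using cont continuous_on_subset assms by fastforce
  qed (use inside that \<open>p < u\<close> in \<open>auto intro: continuous_on_affine islimpt_greaterThanLessThan\<close>)
  moreover have "b \<in> set (concat D)" using b(1) c(1) by auto
  then have "\<bar>s\<bar> \<le> dnf_slope_bound D kT kY"
    unfolding s_def dnf_slope_bound_def abs_minus_cancel by (intro member_le_sum) auto
  ultimately show ?thesis by blast
qed

lemma graph_increment_bound:
  assumes cont: "continuous_on {0..q} h" and "u \<in> {0..q}"
  shows "h u - h 0 \<le> sc (dnf_slope_bound D kT kY) u \<and> h 0 - h u \<le> sc (dnf_slope_bound D kT kY) u"
proof (rule increment_bound_from_gaps[of "graph_thresholds D kT kY e"])
  show "finite (graph_thresholds D kT kY e)" unfolding graph_thresholds_def by simp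
next
  fix p u :: 'v
  assume "0 \<le> p" "p < u" "u \<le> q" "\<forall>w\<in>graph_thresholds D kT kY e. w \<le> p \<or> u \<le> w"
  then obtain s c0 where s: "\<bar>s\<bar> \<le> dnf_slope_bound D kT kY" and h: "\<forall>t\<in>{p..u}. h t = sc s t + c0"
    using graph_affine_between_thresholds[OF cont] by blast
  have "h u - h p = sc s (u - p)" "h p - h u = sc (- s) (u - p)"
    using h \<open>p < u\<close> by (simp_all add: sc_diff_right sc_minus_left)
  moreover have "s \<le> dnf_slope_bound D kT kY" "- s \<le> dnf_slope_bound D kT kY"
    using s abs_ge_self abs_ge_minus_self order_trans by blast+
  ultimately show "h u - h p \<le> sc (dnf_slope_bound D kT kY) (u - p) \<and>
      h p - h u \<le> sc (dnf_slope_bound D kT kY) (u - p)"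
    using \<open>p < u\<close> sc_mono_scalar[of "u - p"] by simp
qed (use assms in simp)

end

end

definition var_env :: "('i \<Rightarrow> nat) \<Rightarrow> ('i \<Rightarrow> 'v::zero) \<Rightarrow> nat \<Rightarrow> 'v" where
  "var_env \<iota> z j = (if j \<in> range \<iota> then z (inv \<iota> j) else 0)"

lemma var_env_apply: "inj \<iota> \<Longrightarrow> var_env \<iota> z (\<iota> k) = z k"
  unfolding var_env_def by simp

lemma var_env_upd: "inj \<iota> \<Longrightarrow> var_env \<iota> (z(k := v)) = (var_env \<iota> z)(\<iota> k := v)"
  unfolding var_env_def by (auto simp: fun_eq_iff)

lemma definable_iff_var_env:
  "definable sc S \<longleftrightarrow> finite (UNIV :: 'i set) \<and>
     (\<exists>\<phi> (\<iota> :: 'i \<Rightarrow> nat). inj \<iota> \<and> S = {z. sat sc (var_env \<iota> z) \<phi>})"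
  unfolding definable_def var_env_def by simp

definition graph_point :: "'v \<Rightarrow> 'v ^ 'n \<Rightarrow> 'v ^ 'n \<Rightarrow> unit + 'n + 'n \<Rightarrow> 'v" where
  "graph_point t x y k = (case k of Inl _ \<Rightarrow> t | Inr (Inl j) \<Rightarrow> x $ j | Inr (Inr j) \<Rightarrow> y $ j)"

lemma definable_homotopy_iff_graph_point:
  "definable_homotopy sc q X H \<longleftrightarrow>
     definable sc {graph_point t x (H (t, x)) | t x. t \<in> {0..q} \<and> x \<in> X}"
  unfolding definable_homotopy_def graph_point_def by simp

lemma graph_point_agree_iff:
  fixes x x' y' :: "'v::zero ^ 'n" and i :: 'n
  shows "(\<forall>k. k \<notin> range (\<lambda>j. Inr (Inr j)) - {Inr (Inr i)} \<longrightarrow>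
      graph_point t' x' y' k = ((graph_point 0 x 0)(Inl () := t, Inr (Inr i) := y)) k)
    \<longleftrightarrow> t' = t \<and> x' = x \<and> y' $ i = y"
proof -
  have "k \<notin> range (\<lambda>j. Inr (Inr j)) - {Inr (Inr i)} \<longleftrightarrow> k = Inl () \<or> (\<exists>j. k = Inr (Inl j)) \<or> k = Inr (Inr i)"
    for k :: "unit + 'n + 'n"
  proof (cases k)
    case (Inr k')
    then show ?thesis by (cases k') auto
  qed auto
  then show ?thesis by (auto simp: graph_point_def vec_eq_iff)
qed

context nontrivial_ordered_vs
begin

lemma definable_cylinder_dnf:
  fixes S :: "('i \<Rightarrow> 'v) set" and J :: "'i set"
  assumes "definable sc S"
  shows "\<exists>(\<iota> :: 'i \<Rightarrow> nat) D. inj \<iota> \<and>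
    (\<forall>z. dnf_holds (var_env \<iota> z) D \<longleftrightarrow> (\<exists>z'\<in>S. \<forall>k. k \<notin> J \<longrightarrow> z' k = z k))"
proof -
  obtain \<phi> and \<iota> :: "'i \<Rightarrow> nat" where "finite (UNIV :: 'i set)" and \<iota>: "inj \<iota>"
    and S: "S = {z. sat sc (var_env \<iota> z) \<phi>}"
    using assms unfolding definable_iff_var_env by blast
  then have "finite (\<iota> ` J)" by (meson finite_imageI finite_subset subset_UNIV)
  then obtain D where D: "\<And>e. dnf_holds e D \<longleftrightarrow>
      (\<exists>e'. (\<forall>j. j \<notin> \<iota> ` J \<longrightarrow> e' j = e j) \<and> dnf_holds e' (dnf_of_fm \<phi>))"
    using dnf_exists_vars by blast
  have "dnf_holds (var_env \<iota> z) D \<longleftrightarrow> (\<exists>z'\<in>S. \<forall>k. k \<notin> J \<longrightarrow> z' k = z k)" for z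
  proof
    assume "dnf_holds (var_env \<iota> z) D"
    then obtain e' where e': "\<forall>j. j \<notin> \<iota> ` J \<longrightarrow> e' j = var_env \<iota> z j" "dnf_holds e' (dnf_of_fm \<phi>)"
      using D by blast
    have "var_env \<iota> (e' \<circ> \<iota>) = e'"
    proof
      fix j
      show "var_env \<iota> (e' \<circ> \<iota>) j = e' j"
        using e'(1)[rule_format, of j] by (cases "j \<in> range \<iota>") (auto simp: var_env_def f_inv_into_f)
    qed
    then have "e' \<circ> \<iota> \<in> S" using e'(2) unfolding S by (simp add: dnf_holds_dnf_of_fm)
    moreover have "(e' \<circ> \<iota>) k = z k" if "k \<notin> J" for k
      using that e'(1)[rule_format, of "\<iota> k"] \<iota> by (simp add: inj_image_mem_iff var_env_apply)
    ultimately show "\<exists>z'\<in>S. \<forall>k. k \<notin> J \<longrightarrow> z' k = z k" by blast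
  next
    assume "\<exists>z'\<in>S. \<forall>k. k \<notin> J \<longrightarrow> z' k = z k"
    then obtain z' where "dnf_holds (var_env \<iota> z') (dnf_of_fm \<phi>)" and z': "\<forall>k. k \<notin> J \<longrightarrow> z' k = z k"
      unfolding S by (auto simp: dnf_holds_dnf_of_fm)
    moreover have "var_env \<iota> z' j = var_env \<iota> z j" if "j \<notin> \<iota> ` J" for j
      using that z' \<iota> by (cases "j \<in> range \<iota>") (auto simp: var_env_apply, simp add: var_env_def)
    ultimately show "dnf_holds (var_env \<iota> z) D" using D by blast
  qed
  then show ?thesis using \<iota> by blast
qed

lemma homotopy_coordinate_graph:
  fixes X :: "('v ^ 'n) set" and H :: "'v \<times> ('v ^ 'n) \<Rightarrow> 'v ^ 'n" and i :: 'n
  assumes "definable_homotopy sc q X H"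
  shows "\<exists>D kT kY. kT \<noteq> kY \<and>
    (\<forall>x\<in>X. \<exists>e. \<forall>t y. dnf_holds (e(kT := t, kY := y)) D \<longleftrightarrow> t \<in> {0..q} \<and> y = H (t, x) $ i)"
proof -
  let ?G = "{graph_point t x (H (t, x)) | t x. t \<in> {0..q} \<and> x \<in> X}"
  let ?J = "range (\<lambda>j. Inr (Inr j)) - {Inr (Inr i)} :: (unit + 'n + 'n) set"
  obtain \<iota> :: "unit + 'n + 'n \<Rightarrow> nat" and D where \<iota>: "inj \<iota>"
    and D: "\<And>z. dnf_holds (var_env \<iota> z) D \<longleftrightarrow> (\<exists>z'\<in>?G. \<forall>k. k \<notin> ?J \<longrightarrow> z' k = z k)"
    using definable_cylinder_dnf[of ?G ?J] assms unfolding definable_homotopy_iff_graph_point by blast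
  define kT kY where "kT = \<iota> (Inl ())" and "kY = \<iota> (Inr (Inr i))"
  have "kT \<noteq> kY" using \<iota> unfolding kT_def kY_def by (simp add: inj_eq)
  moreover have "\<exists>e. \<forall>t y. dnf_holds (e(kT := t, kY := y)) D \<longleftrightarrow> t \<in> {0..q} \<and> y = H (t, x) $ i"
    if "x \<in> X" for x
  proof (intro exI allI)
    fix t y
    let ?z = "(graph_point 0 x 0)(Inl () := t, Inr (Inr i) := y)"
    have env: "(var_env \<iota> (graph_point 0 x 0))(kT := t, kY := y) = var_env \<iota> ?z"
      using \<iota> unfolding kT_def kY_def by (simp add: var_env_upd)
    have "dnf_holds ((var_env \<iota> (graph_point 0 x 0))(kT := t, kY := y)) D \<longleftrightarrow>
        (\<exists>t' x'. t' \<in> {0..q} \<and> x' \<in> X \<and> (\<forall>k. k \<notin> ?J \<longrightarrow> graph_point t' x' (H (t', x')) k = ?z k))"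
      unfolding env D by blast
    also have "\<dots> \<longleftrightarrow> t \<in> {0..q} \<and> y = H (t, x) $ i"
      unfolding graph_point_agree_iff using \<open>x \<in> X\<close> by auto
    finally show "dnf_holds ((var_env \<iota> (graph_point 0 x 0))(kT := t, kY := y)) D \<longleftrightarrow>
        t \<in> {0..q} \<and> y = H (t, x) $ i" .
  qed
  ultimately show ?thesis by blast
qed

lemma homotopy_coordinate_increment_bound:
  fixes X :: "('v ^ 'n) set" and H :: "'v \<times> ('v ^ 'n) \<Rightarrow> 'v ^ 'n" and i :: 'n
  assumes "definable_homotopy sc q X H" "continuous_on ({0..q} \<times> X) H" "0 \<le> q"
  shows "\<exists>C. \<forall>x\<in>X. H (q, x) $ i - H (0, x) $ i \<le> sc C q \<and> H (0, x) $ i - H (q, x) $ i \<le> sc C q"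
proof -
  obtain D kT kY where "kT \<noteq> kY"
    and graph: "\<forall>x\<in>X. \<exists>e. \<forall>t y. dnf_holds (e(kT := t, kY := y)) D \<longleftrightarrow> t \<in> {0..q} \<and> y = H (t, x) $ i"
    using homotopy_coordinate_graph[OF assms(1)] by blast
  have "H (q, x) $ i - H (0, x) $ i \<le> sc (dnf_slope_bound D kT kY) q \<and>
      H (0, x) $ i - H (q, x) $ i \<le> sc (dnf_slope_bound D kT kY) q" if "x \<in> X" for x
  proof -
    obtain e where "\<And>t y. dnf_holds (e(kT := t, kY := y)) D \<longleftrightarrow> t \<in> {0..q} \<and> y = H (t, x) $ i"
      using graph \<open>x \<in> X\<close> by blast
    moreover have "continuous_on {0..q} (\<lambda>t. H (t, x))"
      using \<open>x \<in> X\<close> by (intro continuous_on_compose2[OF assms(2)] continuous_intros) auto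
    ultimately show ?thesis
      using graph_increment_bound[OF \<open>kT \<noteq> kY\<close>, of e D q "\<lambda>t. H (t, x) $ i" q] assms(3)
      by (simp add: cont_vec_nth)
  qed
  then show ?thesis by blast
qed

lemma bounded_box_if_coordinates_near:
  fixes X :: "('v ^ 'n) set"
  assumes "\<And>i. \<exists>c. \<forall>x\<in>X. x $ i - a $ i \<le> c \<and> a $ i - x $ i \<le> c"
  shows "bounded_box X"
proof -
  obtain c where c: "\<And>i. \<forall>x\<in>X. x $ i - a $ i \<le> c i \<and> a $ i - x $ i \<le> c i"
    using assms by metis
  obtain r :: 'v where "0 < r" using exists_pos by blast
  have "(\<chi> i. a $ i - c i - r) $ i < x $ i \<and> x $ i < (\<chi> i. a $ i + c i + r) $ i" if "x \<in> X" for x i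
  proof -
    have "a $ i - c i \<le> x $ i" "x $ i \<le> a $ i + c i"
      using c[of i] that by (auto simp: algebra_simps)
    moreover have "a $ i - c i - r < a $ i - c i" "a $ i + c i < a $ i + c i + r"
      using \<open>0 < r\<close> by simp_all
    ultimately have "a $ i - c i - r < x $ i" "x $ i < a $ i + c i + r" by order+
    then show ?thesis by simp
  qed
  then show ?thesis unfolding bounded_box_def by blast
qed

end

theorem mainTheorem9:
  fixes sc :: "'k::{division_ring,linordered_ring_strict} \<Rightarrow> 'v::{linordered_ab_group_add,linorder_topology} \<Rightarrow> 'v"
    and X :: "('v ^ 'n) set"
  assumes "ordered_vector_space sc"
    and "\<exists>r::'v. r \<noteq> 0"
    and "definable_vset sc X"
    and "\<not> bounded_box X"
  shows "\<not> definably_contractible sc X"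
proof
  assume "definably_contractible sc X"
  interpret nontrivial_ordered_vs sc using assms(1,2) by unfold_locales
  obtain a q H where "0 \<le> q" and H: "definable_homotopy sc q X H" "continuous_on ({0..q} \<times> X) H"
    and start: "(\<lambda>x. H (0, x)) ` X = {a}" and finish: "\<forall>x\<in>X. H (q, x) = x"
    using \<open>definably_contractible sc X\<close>
    unfolding definably_contractible_def deformation_retracts_def by blast
  have "bounded_box X"
  proof (rule bounded_box_if_coordinates_near)
    fix i
    obtain C where "\<forall>x\<in>X. H (q, x) $ i - H (0, x) $ i \<le> sc C q \<and> H (0, x) $ i - H (q, x) $ i \<le> sc C q"
      using homotopy_coordinate_increment_bound[OF H \<open>0 \<le> q\<close>] by blast
    moreover have "H (0, x) = a" if "x \<in> X" for x using start that by blast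
    ultimately show "\<exists>c. \<forall>x\<in>X. x $ i - a $ i \<le> c \<and> a $ i - x $ i \<le> c"
      using finish by (intro exI[of _ "sc C q"]) auto
  qed
  then show False using assms(4) by contradiction
qed

end
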